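(* Let $G$ be a threshold graph on $n$ vertices with binary string $b=0^{s_1}1^{t_1}\cdots0^{s_k}1^{t_k}$ (all $s_i,t_i\geq1$). Let $s=\min_i s_i$, $t=\min_i t_i$, $\sigma=\max_i s_i$, $\tau=\max_i t_i$. Let $G'$ be the threshold graph with binary string $b'=(0^s1^t)^k$ (the block $0^s1^t$ repeated $k$ times) and $G''$ the threshold graph with binary string $b''=(0^\sigma1^\tau)^k$, with $n'=k(s+t)$ and $n''=k(\sigma+\tau)$ vertices respectively. Then \[ \lambda_i(G'')\leq\lambda_i(G)\leq\lambda_i(G'),\quad i=1,\ldots,k, \] and \[ \lambda_{n'-j}(G')\leq\lambda_{n-j}(G)\leq\lambda_{n''-j}(G''),\quad j=0,\ldots,k-1. \]
   Context: Eigenvalues of a graph $H$ on $m$ vertices are those of its $(0,1)$-adjacency matrix, ordered $\lambda_1(H)\leq\cdots\leq\lambda_m(H)$. Threshold graphs from binary strings: given $b=b_1\cdots b_n\in\{0,1\}^n$ with $b_1=0$, start with a single vertex and for $j=2,\ldots,n$ add a new vertex adjacent to all previous vertices if $b_j=1$ and isolated if $b_j=0$; the result is $G(b)$, and $b$ is its binary string. $0^s$ (resp. $1^t$) denotes $s$ consecutive zeros (resp. $t$ consecutive ones). *)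

theory Defs
  imports "Jordan_Normal_Form.Char_Poly"
begin

text \<open>Binary strings are lists of booleans: True = 1, False = 0. Vertex indices are 0-based.
  In the threshold graph G(b), for vertices i < j, i and j are adjacent iff b_j = 1
  (vertex j was added as a dominating vertex).\<close>

definition threshold_adj :: "bool list \<Rightarrow> real mat" where
  "threshold_adj b = mat (length b) (length b)
     (\<lambda>(i, j). if i \<noteq> j \<and> b ! (max i j) then 1 else 0)"

text \<open>Eigenvalues (with multiplicity) of a real matrix, in nondecreasing order, as the
  sorted multiset of real roots of the characteristic polynomial; 1-indexed:
  eig A 1 is the smallest.\<close>

definition eig :: "real mat \<Rightarrow> nat \<Rightarrow> real" where
  "eig A i = sorted_list_of_multiset (proots (char_poly A)) ! (i - 1)"

definition block_string :: "nat list \<Rightarrow> nat list \<Rightarrow> bool list" where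
  "block_string s t = concat (map (\<lambda>i. replicate (s ! i) False @ replicate (t ! i) True)
                         [0..<length s])"

end

theory Submission
  imports Defs "Jordan_Normal_Form.Schur_Decomposition" "HOL-Library.Sublist"
begin

text \<open>Shrinking every block 0^{s_i} 1^{t_i} to 0^s 1^t, resp. growing it to 0^\<sigma> 1^\<tau>, shows that
  b' is a subsequence of b and b one of b''. Deleting letters of a binary string deletes vertices of
  its threshold graph without changing the adjacencies among the others, since for i < j adjacency
  depends only on the letter of j. Hence G' is an induced subgraph of G and G one of G'', i.e. their
  adjacency matrices are principal submatrices of each other, and the inequalities are Cauchy's
  interlacing theorem (the index ranges fit because k \<le> n' \<le> n \<le> n'').

  Interlacing is proved by counting eigenvalues: for a real symmetric A, the number of eigenvalues
  \<le> c equals the largest dimension of a subspace on which x \<bullet> A x \<le> c (x \<bullet> x). Such subspaces for a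
  principal submatrix are also such subspaces for A, which gives the lower inequality; the upper one
  follows by passing to - A. The counting argument rests on the orthogonal diagonalization of
  real symmetric matrices, proved by the usual deflation along a (real) eigenvector.\<close>

section \<open>Orthogonal diagonalization of real symmetric matrices\<close>

definition symmetric_mat :: "real mat \<Rightarrow> nat \<Rightarrow> bool" where
  "symmetric_mat A n \<longleftrightarrow> A \<in> carrier_mat n n \<and> transpose_mat A = A"

definition isometry_mat :: "real mat \<Rightarrow> nat \<Rightarrow> nat \<Rightarrow> bool" where
  "isometry_mat P n m \<longleftrightarrow> P \<in> carrier_mat n m \<and> transpose_mat P * P = 1\<^sub>m m"

lemma symmetric_matI:
  assumes "A \<in> carrier_mat n n" and "\<And>i j. i < n \<Longrightarrow> j < n \<Longrightarrow> A $$ (i, j) = A $$ (j, i)"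
  shows "symmetric_mat A n"
  using assms unfolding symmetric_mat_def by (auto intro!: eq_matI)

lemma symmetric_mat_sym:
  assumes "symmetric_mat A n" and "i < n" and "j < n"
  shows "A $$ (i, j) = A $$ (j, i)"
  using assms unfolding symmetric_mat_def by (metis carrier_matD index_transpose_mat(1))

lemma symmetric_mat_uminus: "symmetric_mat A n \<Longrightarrow> symmetric_mat (- A) n"
  by (rule symmetric_matI) (auto simp: symmetric_mat_def symmetric_mat_sym)

lemma symmetric_mat_congruence:
  assumes "symmetric_mat A n" and "P \<in> carrier_mat n m"
  shows "symmetric_mat (transpose_mat P * A * P) m"
proof -
  have A: "A \<in> carrier_mat n n" and At: "transpose_mat A = A"
    using assms(1) unfolding symmetric_mat_def by auto
  have "transpose_mat (transpose_mat P * A * P) = transpose_mat P * transpose_mat (transpose_mat P * A)"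
    using A assms(2) by (subst transpose_mult[of _ m n]) auto
  also have "\<dots> = transpose_mat P * A * P"
    using A assms(2) At by (subst transpose_mult[of _ m n]) (auto simp: assoc_mult_mat[of _ m n _ n _ m])
  finally show ?thesis using A assms(2) unfolding symmetric_mat_def by auto
qed

lemma isometry_mat_right_inverse:
  assumes "isometry_mat Q n n"
  shows "Q * transpose_mat Q = 1\<^sub>m n"
  using assms mat_mult_left_right_inverse[of "transpose_mat Q" n Q] unfolding isometry_mat_def by auto

lemma isometry_mat_transpose: "isometry_mat Q n n \<Longrightarrow> isometry_mat (transpose_mat Q) n n"
  using isometry_mat_right_inverse unfolding isometry_mat_def by auto

lemma isometry_mat_mult:
  assumes P: "isometry_mat P n m" and R: "isometry_mat R m k"
  shows "isometry_mat (P * R) n k"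
proof -
  have Pc: "P \<in> carrier_mat n m" and Rc: "R \<in> carrier_mat m k"
    using P R unfolding isometry_mat_def by auto
  have "transpose_mat (P * R) * (P * R) = transpose_mat R * ((transpose_mat P * P) * R)"
    using Pc Rc by (simp add: transpose_mult[OF Pc Rc] assoc_mult_mat[of "transpose_mat R" k m _ n _ k]
        assoc_mult_mat[of "transpose_mat P" m n P m R k])
  also have "\<dots> = 1\<^sub>m k" using P R Rc unfolding isometry_mat_def by simp
  finally show ?thesis using Pc Rc unfolding isometry_mat_def by auto
qed

lemma transpose_mult_isometry_mat_vec:
  assumes "isometry_mat P n m" and "y \<in> carrier_vec m"
  shows "transpose_mat P *\<^sub>v (P *\<^sub>v y) = y"
  using assms assoc_mult_mat_vec[of "transpose_mat P" m n P m y] unfolding isometry_mat_def by auto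

lemma isometry_mat_mult_vec_eq_0:
  assumes "isometry_mat P n m" and "y \<in> carrier_vec m" and "P *\<^sub>v y = 0\<^sub>v n"
  shows "y = 0\<^sub>v m"
  using transpose_mult_isometry_mat_vec[OF assms(1,2)] assms unfolding isometry_mat_def by auto

lemma isometry_mat_inner:
  assumes "isometry_mat P n m" and "y \<in> carrier_vec m" and "z \<in> carrier_vec m"
  shows "(P *\<^sub>v y) \<bullet> (P *\<^sub>v z) = y \<bullet> z"
  using assms transpose_vec_mult_scalar[of P n m z "P *\<^sub>v y"] transpose_mult_isometry_mat_vec[OF assms(1,2)]
  unfolding isometry_mat_def by auto

lemma isometry_mat_quadratic_form:
  assumes P: "isometry_mat P n m" and A: "A \<in> carrier_mat n n" and y: "y \<in> carrier_vec m"
  shows "(P *\<^sub>v y) \<bullet> (A *\<^sub>v (P *\<^sub>v y)) = y \<bullet> ((transpose_mat P * A * P) *\<^sub>v y)"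
proof -
  have Pc: "P \<in> carrier_mat n m" using P unfolding isometry_mat_def by auto
  have "(transpose_mat P * A * P) *\<^sub>v y = transpose_mat P *\<^sub>v (A *\<^sub>v (P *\<^sub>v y))"
    using Pc A y by (simp add: assoc_mult_mat_vec[of _ m n _ m y] assoc_mult_mat_vec[of _ m n _ n])
  then have "y \<bullet> ((transpose_mat P * A * P) *\<^sub>v y) = (transpose_mat P *\<^sub>v (A *\<^sub>v (P *\<^sub>v y))) \<bullet> y"
    using Pc A y by (simp add: comm_scalar_prod[of y m])
  also have "\<dots> = (A *\<^sub>v (P *\<^sub>v y)) \<bullet> (P *\<^sub>v y)"
    using Pc A y by (simp add: transpose_vec_mult_scalar)
  finally show ?thesis using Pc A y by (simp add: comm_scalar_prod[of _ n])
qed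

lemma eigenvalue_of_real_symmetric_is_real:
  assumes A: "symmetric_mat A n" and z: "eigenvalue (map_mat complex_of_real A) z"
  shows "cnj z = z"
proof -
  let ?C = "map_mat complex_of_real A"
  have C: "?C \<in> carrier_mat n n" and Ct: "transpose_mat ?C = ?C"
    using A unfolding symmetric_mat_def by (auto simp: map_mat_transpose)
  obtain w where w: "w \<in> carrier_vec n" "w \<noteq> 0\<^sub>v n" and Cw: "?C *\<^sub>v w = z \<cdot>\<^sub>v w"
    using z C unfolding eigenvalue_def eigenvector_def by auto
  have conj_C: "conjugate (?C *\<^sub>v w) = ?C *\<^sub>v conjugate w"
  proof (rule eq_vecI)
    fix i assume "i < dim_vec (?C *\<^sub>v conjugate w)"
    then have i: "i < n" using C by simp
    have "conjugate (row ?C i) = row ?C i" using i C by (auto intro!: eq_vecI)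
    then show "conjugate (?C *\<^sub>v w) $ i = (?C *\<^sub>v conjugate w) $ i"
      using i C w conjugate_sprod_vec[of "row ?C i" n w] by auto
  qed (use C in auto)
  have "z * (w \<bullet>c w) = (?C *\<^sub>v w) \<bullet>c w"
    using w Cw by simp
  also have "\<dots> = w \<bullet> (?C *\<^sub>v conjugate w)"
    using transpose_vec_mult_scalar[OF C, of "conjugate w" w] w Ct by simp
  also have "\<dots> = cnj z * (w \<bullet>c w)"
    using w by (simp add: conj_C[symmetric] Cw conjugate_smult_vec)
  finally show ?thesis
    using w by (simp add: mult_right_cancel)
qed

lemma symmetric_mat_has_eigenvalue:
  assumes A: "symmetric_mat A n" and n: "0 < n"
  shows "\<exists>e. eigenvalue A e"
proof -
  let ?C = "map_mat complex_of_real A"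
  have Ac: "A \<in> carrier_mat n n" and C: "?C \<in> carrier_mat n n"
    using A unfolding symmetric_mat_def by auto
  have cp: "char_poly ?C = map_poly of_real (char_poly A)"
    by (rule of_real_hom.char_poly_hom[OF Ac])
  have "degree (char_poly ?C) = n" using degree_monic_char_poly[OF C] by simp
  then have "\<not> constant (poly (char_poly ?C))" using n by (simp add: constant_degree)
  then obtain z where "poly (char_poly ?C) z = 0" using fundamental_theorem_of_algebra by blast
  then have z: "eigenvalue ?C z" using eigenvalue_root_char_poly[OF C] by simp
  have "z = of_real (Re z)"
    using eigenvalue_of_real_symmetric_is_real[OF A z] by (metis Reals_cnj_iff of_real_Re)
  then have "of_real (poly (char_poly A) (Re z)) = (0 :: complex)"
    using \<open>poly (char_poly ?C) z = 0\<close> unfolding cp by (metis of_real_hom.poly_map_poly)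
  then show ?thesis using eigenvalue_root_char_poly[OF Ac] by auto
qed

lemma isometry_mat_with_first_column:
  assumes v: "v \<in> carrier_vec n" and v0: "v \<noteq> 0\<^sub>v n"
  obtains Q where "isometry_mat Q n n" and "col Q 0 = (1 / sqrt (v \<bullet> v)) \<cdot>\<^sub>v v"
proof -
  interpret cof_vec_space n "TYPE(real)" .
  define b where "b = basis_completion v"
  define ws where "ws = gram_schmidt n b"
  have n: "n \<noteq> 0" using v v0 by auto
  from basis_completion[OF v v0, folded b_def]
  have b: "distinct b" "\<not> lin_dep (set b)" "set b \<subseteq> carrier_vec n" "hd b = v" "length b = n"
    by auto
  from b(4,5) n obtain vs where bv: "b = v # vs" by (cases b) auto
  from gram_schmidt_result[OF b(3,1,2) refl, folded ws_def]
  have ws: "set ws \<subseteq> carrier_vec n" "corthogonal ws" "length ws = n" by (auto simp: b(5))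
  have ws0: "ws ! 0 = v"
    using gram_schmidt_hd[OF v, of vs, folded bv ws_def] ws(3) n by (cases ws) auto
  define us where "us = map (\<lambda>w. (1 / sqrt (w \<bullet> w)) \<cdot>\<^sub>v w) ws"
  define Q where "Q = mat_of_cols n us"
  have us: "length us = n" "\<And>i. i < n \<Longrightarrow> us ! i \<in> carrier_vec n"
    using ws by (auto simp: us_def)
  have us_orthonormal: "us ! i \<bullet> us ! j = (if i = j then 1 else 0)" if ij: "i < n" "j < n" for i j
  proof -
    have wsij: "ws ! i \<in> carrier_vec n" "ws ! j \<in> carrier_vec n" "(ws ! i \<bullet> ws ! j = 0) = (i \<noteq> j)"
      using ws ij unfolding corthogonal_def by auto
    have "ws ! i \<bullet> ws ! i \<ge> 0"
      unfolding scalar_prod_def by (intro sum_nonneg) auto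
    with wsij ij have "i = j \<Longrightarrow> ws ! i \<bullet> ws ! i > 0" by fastforce
    then show ?thesis
      using wsij ij ws(3) by (auto simp: us_def real_sqrt_mult[symmetric])
  qed
  have "transpose_mat Q * Q = 1\<^sub>m n"
    by (rule eq_matI) (use us us_orthonormal in \<open>auto simp: Q_def\<close>)
  then have "isometry_mat Q n n" unfolding isometry_mat_def Q_def using us by auto
  moreover have "col Q 0 = us ! 0"
    using us n by (simp add: Q_def)
  then have "col Q 0 = (1 / sqrt (v \<bullet> v)) \<cdot>\<^sub>v v"
    using ws n ws0 by (simp add: us_def)
  ultimately show thesis by (rule that)
qed

lemma symmetric_mat_deflation:
  assumes A: "symmetric_mat A (Suc m)" and Q: "isometry_mat Q (Suc m) (Suc m)"
    and ev: "A *\<^sub>v col Q 0 = e \<cdot>\<^sub>v col Q 0"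
  obtains B where "symmetric_mat B m"
    and "transpose_mat Q * A * Q = four_block_mat (mat 1 1 (\<lambda>_. e)) (0\<^sub>m 1 m) (0\<^sub>m m 1) B"
proof -
  let ?n = "Suc m"
  define A' where "A' = transpose_mat Q * A * Q"
  have Ac: "A \<in> carrier_mat ?n ?n" and Qc: "Q \<in> carrier_mat ?n ?n"
    using A Q unfolding symmetric_mat_def isometry_mat_def by auto
  have A': "symmetric_mat A' ?n" unfolding A'_def using symmetric_mat_congruence[OF A Qc] .
  have col0: "A' $$ (i, 0) = (if i = 0 then e else 0)" if i: "i < ?n" for i
  proof -
    have "A' = transpose_mat Q * (A * Q)" unfolding A'_def using Ac Qc by auto
    then have "A' $$ (i, 0) = row (transpose_mat Q) i \<bullet> col (A * Q) 0"
      using i Ac Qc by simp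
    also have "col (A * Q) 0 = A *\<^sub>v col Q 0"
      using Ac Qc by (intro col_mult2) auto
    also have "row (transpose_mat Q) i \<bullet> (A *\<^sub>v col Q 0) = e * ((transpose_mat Q * Q) $$ (i, 0))"
      using i Qc by (simp add: ev)
    finally show ?thesis using Q i unfolding isometry_mat_def by simp
  qed
  define B where "B = mat m m (\<lambda>(i, j). A' $$ (Suc i, Suc j))"
  have "symmetric_mat B m"
    by (rule symmetric_matI) (auto simp: B_def intro: symmetric_mat_sym[OF A'])
  moreover have "A' = four_block_mat (mat 1 1 (\<lambda>_. e)) (0\<^sub>m 1 m) (0\<^sub>m m 1) B"
  proof (rule eq_matI)
    fix i j assume "i < dim_row (four_block_mat (mat 1 1 (\<lambda>_. e)) (0\<^sub>m 1 m) (0\<^sub>m m 1) B)"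
      and "j < dim_col (four_block_mat (mat 1 1 (\<lambda>_. e)) (0\<^sub>m 1 m) (0\<^sub>m m 1) B)"
    then have ij: "i < ?n" "j < ?n" by (auto simp: B_def)
    then show "A' $$ (i, j) = four_block_mat (mat 1 1 (\<lambda>_. e)) (0\<^sub>m 1 m) (0\<^sub>m m 1) B $$ (i, j)"
      using col0[of i] col0[of j] symmetric_mat_sym[OF A' ij]
      by (cases i; cases j) (auto simp: B_def)
  qed (use A' in \<open>auto simp: B_def symmetric_mat_def\<close>)
  ultimately show thesis using that unfolding A'_def by blast
qed

lemma mult_four_block_diag_mat:
  assumes "A1 \<in> carrier_mat n1 n1" "A2 \<in> carrier_mat n2 n2" "B1 \<in> carrier_mat n1 n1" "B2 \<in> carrier_mat n2 n2"
  shows "four_block_mat A1 (0\<^sub>m n1 n2) (0\<^sub>m n2 n1) A2 * four_block_mat B1 (0\<^sub>m n1 n2) (0\<^sub>m n2 n1) B2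
       = four_block_mat (A1 * B1) (0\<^sub>m n1 n2) (0\<^sub>m n2 n1) (A2 * B2)"
  using assms by (simp add: mult_four_block_mat[of _ n1 n1 _ n2 _ n2 _ _ n1 _ n2])

lemma transpose_four_block_diag_mat:
  assumes "A1 \<in> carrier_mat n1 n1" "A2 \<in> carrier_mat n2 n2"
  shows "transpose_mat (four_block_mat A1 (0\<^sub>m n1 n2) (0\<^sub>m n2 n1) A2)
       = four_block_mat (transpose_mat A1) (0\<^sub>m n1 n2) (0\<^sub>m n2 n1) (transpose_mat A2)"
  using assms by (simp add: transpose_four_block_mat[of _ n1 n1 _ n2 _ n2])

lemma isometry_mat_four_block:
  assumes Q: "isometry_mat Q m m"
  shows "isometry_mat (four_block_mat (1\<^sub>m 1) (0\<^sub>m 1 m) (0\<^sub>m m 1) Q) (Suc m) (Suc m)"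
proof -
  have Qc: "Q \<in> carrier_mat m m" using Q unfolding isometry_mat_def by auto
  let ?F = "four_block_mat (1\<^sub>m 1) (0\<^sub>m 1 m) (0\<^sub>m m 1) Q"
  have "transpose_mat ?F * ?F = four_block_mat (1\<^sub>m 1) (0\<^sub>m 1 m) (0\<^sub>m m 1) (transpose_mat Q * Q)"
    using Qc by (simp add: transpose_four_block_diag_mat[of _ "Suc 0" _ m] mult_four_block_diag_mat[of _ "Suc 0" _ m])
  then show ?thesis using Q Qc unfolding isometry_mat_def by auto
qed

lemma diagonal_mat_four_block:
  assumes "A \<in> carrier_mat 1 1" "B \<in> carrier_mat m m" "diagonal_mat B"
  shows "diagonal_mat (four_block_mat A (0\<^sub>m 1 m) (0\<^sub>m m 1) B)"
  using assms unfolding diagonal_mat_def by auto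

theorem symmetric_mat_orthogonally_diagonalizable:
  assumes "symmetric_mat A n"
  shows "\<exists>Q. isometry_mat Q n n \<and> diagonal_mat (transpose_mat Q * A * Q)"
  using assms
proof (induction n arbitrary: A)
  case 0
  have "isometry_mat (1\<^sub>m 0) 0 0" unfolding isometry_mat_def by auto
  moreover have "diagonal_mat (M :: real mat)" if "M \<in> carrier_mat 0 0" for M
    using that unfolding diagonal_mat_def by auto
  ultimately show ?case using "0.prems" unfolding symmetric_mat_def by fastforce
next
  case (Suc m)
  have Ac: "A \<in> carrier_mat (Suc m) (Suc m)" using Suc.prems unfolding symmetric_mat_def by auto
  obtain e v where v: "v \<in> carrier_vec (Suc m)" "v \<noteq> 0\<^sub>v (Suc m)" and Av: "A *\<^sub>v v = e \<cdot>\<^sub>v v"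
    using symmetric_mat_has_eigenvalue[OF Suc.prems] Ac unfolding eigenvalue_def eigenvector_def by auto
  obtain Q0 where Q0: "isometry_mat Q0 (Suc m) (Suc m)" and col0: "col Q0 0 = (1 / sqrt (v \<bullet> v)) \<cdot>\<^sub>v v"
    using isometry_mat_with_first_column[OF v] .
  have "A *\<^sub>v col Q0 0 = e \<cdot>\<^sub>v col Q0 0"
    using Ac v unfolding col0 by (auto simp: mult_mat_vec Av smult_smult_assoc mult.commute)
  then obtain B where B: "symmetric_mat B m"
    and A': "transpose_mat Q0 * A * Q0 = four_block_mat (mat 1 1 (\<lambda>_. e)) (0\<^sub>m 1 m) (0\<^sub>m m 1) B"
    using symmetric_mat_deflation[OF Suc.prems Q0] by blast
  obtain Q1 where Q1: "isometry_mat Q1 m m" and D: "diagonal_mat (transpose_mat Q1 * B * Q1)"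
    using Suc.IH[OF B] by blast
  define F where "F = four_block_mat (1\<^sub>m 1) (0\<^sub>m 1 m) (0\<^sub>m m 1) Q1"
  have F: "isometry_mat F (Suc m) (Suc m)" unfolding F_def by (rule isometry_mat_four_block[OF Q1])
  have Q0c: "Q0 \<in> carrier_mat (Suc m) (Suc m)" and Fc: "F \<in> carrier_mat (Suc m) (Suc m)"
    and Q1c: "Q1 \<in> carrier_mat m m" and Bc: "B \<in> carrier_mat m m"
    using Q0 F Q1 B unfolding isometry_mat_def symmetric_mat_def by auto
  have "transpose_mat (Q0 * F) * A * (Q0 * F) = transpose_mat F * (transpose_mat Q0 * A * Q0) * F"
    using Q0c Fc Ac by (simp add: transpose_mult[OF Q0c Fc] assoc_mult_mat[of _ "Suc m" "Suc m" _ "Suc m" _ "Suc m"])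
  also have "\<dots> = four_block_mat (mat 1 1 (\<lambda>_. e)) (0\<^sub>m 1 m) (0\<^sub>m m 1) (transpose_mat Q1 * B * Q1)"
    unfolding A' F_def using Q1c Bc
    by (simp add: transpose_four_block_diag_mat[of _ "Suc 0" _ m] mult_four_block_diag_mat[of _ "Suc 0" _ m])
  finally have "diagonal_mat (transpose_mat (Q0 * F) * A * (Q0 * F))"
    using diagonal_mat_four_block[OF _ _ D] Q1c Bc by simp
  then show ?case using isometry_mat_mult[OF Q0 F] by blast
qed

section \<open>Eigenvalues counted by Rayleigh quotients\<close>

lemma proots_prod_linear_factors: "proots (\<Prod>a\<leftarrow>xs. [:- a, 1:]) = mset (xs :: real list)"
proof (induction xs)
  case (Cons a xs)
  have "(\<Prod>a\<leftarrow>xs. [:- a, 1:]) \<noteq> (0 :: real poly)"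
    by (auto simp: prod_list_zero_iff)
  then have "proots ([:- a, 1:] * (\<Prod>a\<leftarrow>xs. [:- a, 1:]))
      = proots [:- a, 1:] + proots (\<Prod>a\<leftarrow>xs. [:- a, 1:])"
    by (intro proots_mult) simp_all
  then show ?case using Cons.IH proots_linear_factor[of "- a"] by simp
qed simp

lemma isometry_mat_conjugation_inverse:
  assumes "isometry_mat Q n n" and "A \<in> carrier_mat n n"
  shows "Q * (transpose_mat Q * A * Q) * transpose_mat Q = A"
proof -
  have Q: "Q \<in> carrier_mat n n" using assms(1) unfolding isometry_mat_def by auto
  have "Q * (transpose_mat Q * A * Q) * transpose_mat Q
      = (Q * transpose_mat Q) * A * (Q * transpose_mat Q)"
    using Q assms(2) by (simp add: assoc_mult_mat[of _ n n _ n _ n])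
  then show ?thesis using isometry_mat_right_inverse[OF assms(1)] assms(2) by simp
qed

lemma proots_char_poly_orthogonal_diagonal:
  assumes A: "A \<in> carrier_mat n n" and Q: "isometry_mat Q n n"
    and D: "diagonal_mat (transpose_mat Q * A * Q)"
  shows "proots (char_poly A) = mset (diag_mat (transpose_mat Q * A * Q))"
proof -
  let ?D = "transpose_mat Q * A * Q"
  have Qc: "Q \<in> carrier_mat n n" using Q unfolding isometry_mat_def by auto
  have Dc: "?D \<in> carrier_mat n n" using A Qc by auto
  have "similar_mat_wit A ?D Q (transpose_mat Q)"
    using Q A Qc Dc isometry_mat_right_inverse[OF Q] isometry_mat_conjugation_inverse[OF Q A]
    by (intro similar_mat_witI[of _ _ n]) (auto simp: isometry_mat_def)
  then have "char_poly A = char_poly ?D"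
    by (intro char_poly_similar) (auto simp: similar_mat_def)
  also have "\<dots> = (\<Prod>a\<leftarrow>diag_mat ?D. [:- a, 1:])"
    using D Dc by (intro char_poly_upper_triangular) (auto simp: diagonal_mat_def upper_triangular_def)
  finally show ?thesis by (simp add: proots_prod_linear_factors)
qed

lemma size_proots_char_poly_symmetric:
  assumes "symmetric_mat A n"
  shows "size (proots (char_poly A)) = n"
proof -
  obtain Q where Q: "isometry_mat Q n n" and D: "diagonal_mat (transpose_mat Q * A * Q)"
    using symmetric_mat_orthogonally_diagonalizable[OF assms] by blast
  have A: "A \<in> carrier_mat n n" using assms unfolding symmetric_mat_def by auto
  show ?thesis
    using A Q unfolding proots_char_poly_orthogonal_diagonal[OF A Q D]
    by (auto simp: isometry_mat_def diag_mat_def)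
qed

lemma proots_char_poly_uminus:
  assumes "symmetric_mat A n"
  shows "proots (char_poly (- A)) = image_mset uminus (proots (char_poly A))"
proof -
  obtain Q where Q: "isometry_mat Q n n" and D: "diagonal_mat (transpose_mat Q * A * Q)"
    using symmetric_mat_orthogonally_diagonalizable[OF assms] by blast
  have A: "A \<in> carrier_mat n n" and Qc: "Q \<in> carrier_mat n n"
    using assms Q unfolding symmetric_mat_def isometry_mat_def by auto
  have neg: "transpose_mat Q * (- A) * Q = - (transpose_mat Q * A * Q)"
    using A Qc by (simp add: mult_smult_distrib)
  have "diagonal_mat (transpose_mat Q * (- A) * Q)"
    using D unfolding neg diagonal_mat_def by auto
  then have "proots (char_poly (- A)) = mset (diag_mat (- (transpose_mat Q * A * Q)))"
    using proots_char_poly_orthogonal_diagonal[of "- A" n Q] A Q unfolding neg by auto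
  moreover have "diag_mat (- (transpose_mat Q * A * Q)) = map uminus (diag_mat (transpose_mat Q * A * Q))"
    using A Qc by (auto simp: diag_mat_def)
  ultimately show ?thesis
    unfolding proots_char_poly_orthogonal_diagonal[OF A Q D] by simp
qed

text \<open>An r-dimensional subspace is given as the column space of an injective n \<times> r matrix V.\<close>

definition rayleigh_le_subspace :: "real mat \<Rightarrow> nat \<Rightarrow> real \<Rightarrow> nat \<Rightarrow> bool" where
  "rayleigh_le_subspace A n c r \<longleftrightarrow> (\<exists>V \<in> carrier_mat n r.
     (\<forall>a \<in> carrier_vec r. V *\<^sub>v a = 0\<^sub>v n \<longrightarrow> a = 0\<^sub>v r) \<and>
     (\<forall>a \<in> carrier_vec r. (V *\<^sub>v a) \<bullet> (A *\<^sub>v (V *\<^sub>v a)) \<le> c * ((V *\<^sub>v a) \<bullet> (V *\<^sub>v a))))"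

lemma rayleigh_le_subspace_isometry:
  assumes P: "isometry_mat P n m" and A: "A \<in> carrier_mat n n"
    and R: "rayleigh_le_subspace (transpose_mat P * A * P) m c r"
  shows "rayleigh_le_subspace A n c r"
proof -
  obtain V where V: "V \<in> carrier_mat m r"
    and inj: "\<And>a. a \<in> carrier_vec r \<Longrightarrow> V *\<^sub>v a = 0\<^sub>v m \<Longrightarrow> a = 0\<^sub>v r"
    and le: "\<And>a. a \<in> carrier_vec r \<Longrightarrow>
      (V *\<^sub>v a) \<bullet> ((transpose_mat P * A * P) *\<^sub>v (V *\<^sub>v a)) \<le> c * ((V *\<^sub>v a) \<bullet> (V *\<^sub>v a))"
    using R unfolding rayleigh_le_subspace_def by blast
  have Pc: "P \<in> carrier_mat n m" using P unfolding isometry_mat_def by auto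
  have PV: "(P * V) *\<^sub>v a = P *\<^sub>v (V *\<^sub>v a)" if "a \<in> carrier_vec r" for a
    using Pc V that by auto
  have "P * V \<in> carrier_mat n r" using Pc V by auto
  moreover have "a = 0\<^sub>v r" if "a \<in> carrier_vec r" "(P * V) *\<^sub>v a = 0\<^sub>v n" for a
    using that V isometry_mat_mult_vec_eq_0[OF P, of "V *\<^sub>v a"] inj by (auto simp: PV)
  moreover have "((P * V) *\<^sub>v a) \<bullet> (A *\<^sub>v ((P * V) *\<^sub>v a)) \<le> c * (((P * V) *\<^sub>v a) \<bullet> ((P * V) *\<^sub>v a))"
    if "a \<in> carrier_vec r" for a
    using that V le[of a] by (simp add: PV isometry_mat_quadratic_form[OF P A] isometry_mat_inner[OF P])
  ultimately show ?thesis unfolding rayleigh_le_subspace_def by blast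
qed

definition selection_mat :: "nat \<Rightarrow> nat list \<Rightarrow> real mat" where
  "selection_mat n J = mat n (length J) (\<lambda>(i, k). if i = J ! k then 1 else 0)"

definition principal_submat :: "'a mat \<Rightarrow> nat list \<Rightarrow> 'a mat" where
  "principal_submat A J = mat (length J) (length J) (\<lambda>(i, j). A $$ (J ! i, J ! j))"

lemma selection_mat_carrier [simp]: "selection_mat n J \<in> carrier_mat n (length J)"
  and dim_selection_mat [simp]: "dim_row (selection_mat n J) = n" "dim_col (selection_mat n J) = length J"
  unfolding selection_mat_def by auto

lemma col_selection_mat:
  assumes "k < length J" and "J ! k < n"
  shows "col (selection_mat n J) k = unit_vec n (J ! k)"
  using assms by (intro eq_vecI) (auto simp: selection_mat_def unit_vec_def)

lemma transpose_selection_mat_mult_index: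
  assumes "set J \<subseteq> {..<n}" and "M \<in> carrier_mat n p" and "i < length J" and "j < p"
  shows "(transpose_mat (selection_mat n J) * M) $$ (i, j) = M $$ (J ! i, j)"
proof -
  have "J ! i < n" using assms(1,3) nth_mem by auto
  then show ?thesis using assms by (simp add: col_selection_mat)
qed

lemma mult_selection_mat_index:
  assumes "set J \<subseteq> {..<n}" and "M \<in> carrier_mat p n" and "i < p" and "j < length J"
  shows "(M * selection_mat n J) $$ (i, j) = M $$ (i, J ! j)"
proof -
  have "J ! j < n" using assms(1,4) nth_mem by auto
  then show ?thesis using assms by (simp add: col_selection_mat)
qed

lemma isometry_selection_mat:
  assumes "distinct J" and "set J \<subseteq> {..<n}"
  shows "isometry_mat (selection_mat n J) n (length J)"
  unfolding isometry_mat_def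
proof (intro conjI eq_matI)
  fix i j assume "i < dim_row (1\<^sub>m (length J) :: real mat)" "j < dim_col (1\<^sub>m (length J) :: real mat)"
  then have ij: "i < length J" "j < length J" by auto
  have "(transpose_mat (selection_mat n J) * selection_mat n J) $$ (i, j) = selection_mat n J $$ (J ! i, j)"
    by (rule transpose_selection_mat_mult_index) (use assms ij in auto)
  also have "\<dots> = 1\<^sub>m (length J) $$ (i, j)"
    using assms ij nth_mem[of i J] by (simp add: selection_mat_def nth_eq_iff_index_eq subset_eq)
  finally show "(transpose_mat (selection_mat n J) * selection_mat n J) $$ (i, j) = 1\<^sub>m (length J) $$ (i, j)" .
qed auto

lemma principal_submat_selection_mat:
  assumes "A \<in> carrier_mat n n" and "set J \<subseteq> {..<n}"
  shows "transpose_mat (selection_mat n J) * A * selection_mat n J = principal_submat A J"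
proof (rule eq_matI)
  fix i j assume "i < dim_row (principal_submat A J)" "j < dim_col (principal_submat A J)"
  then have ij: "i < length J" "j < length J" by (auto simp: principal_submat_def)
  have "J ! j < n" using assms(2) ij nth_mem by auto
  have "(transpose_mat (selection_mat n J) * A * selection_mat n J) $$ (i, j)
      = (transpose_mat (selection_mat n J) * A) $$ (i, J ! j)"
    by (rule mult_selection_mat_index) (use assms ij in auto)
  also have "\<dots> = A $$ (J ! i, J ! j)"
    by (rule transpose_selection_mat_mult_index) (use assms ij \<open>J ! j < n\<close> in auto)
  finally show "(transpose_mat (selection_mat n J) * A * selection_mat n J) $$ (i, j) = principal_submat A J $$ (i, j)"
    using ij by (simp add: principal_submat_def)
qed (auto simp: principal_submat_def)

lemma selection_mat_mult_vec_outside: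
  assumes "a \<in> carrier_vec (length J)" and "i < n" and "i \<notin> set J"
  shows "(selection_mat n J *\<^sub>v a) $ i = 0"
  using assms by (auto simp: selection_mat_def scalar_prod_def row_def intro!: sum.neutral)

lemma wide_mat_kernel:
  fixes M :: "'a :: idom mat"
  assumes M: "M \<in> carrier_mat n p" and np: "n < p"
  obtains z where "z \<in> carrier_vec p" "z \<noteq> 0\<^sub>v p" "M *\<^sub>v z = 0\<^sub>v n"
proof -
  \<comment> \<open>padding M with zero rows gives a singular square matrix with the same kernel\<close>
  define M' where "M' = mat p p (\<lambda>(i, j). if i < n then M $$ (i, j) else 0)"
  have M': "M' \<in> carrier_mat p p" unfolding M'_def by auto
  have "M' = mat\<^sub>r p p (\<lambda>i. if i = n then 0\<^sub>v p else row M' i)"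
    by (rule eq_matI) (auto simp: M'_def)
  then have "det M' = 0" using det_row_0[OF np, of "\<lambda>i. row M' i"] M' by auto
  then obtain z where z: "z \<in> carrier_vec p" "z \<noteq> 0\<^sub>v p" "M' *\<^sub>v z = 0\<^sub>v p"
    using det_0_iff_vec_prod_zero[OF M'] by auto
  have rows: "row M i = row M' i" if "i < n" for i
    using that M np by (auto simp: M'_def)
  have "M *\<^sub>v z = 0\<^sub>v n"
  proof (rule eq_vecI)
    fix i assume "i < dim_vec (0\<^sub>v n :: 'a vec)"
    then have i: "i < n" by simp
    have "(M *\<^sub>v z) $ i = (M' *\<^sub>v z) $ i" using i M M' np rows[OF i] by simp
    then show "(M *\<^sub>v z) $ i = 0\<^sub>v n $ i" using z(3) i np by simp
  qed (use M in auto)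
  with z(1,2) show thesis by (rule that)
qed

lemma mult_mat_vec_eq_nontrivial:
  fixes V U :: "'a :: idom mat"
  assumes V: "V \<in> carrier_mat n r" and U: "U \<in> carrier_mat n g" and "n < r + g"
  obtains a b where "a \<in> carrier_vec r" "b \<in> carrier_vec g" "a \<noteq> 0\<^sub>v r \<or> b \<noteq> 0\<^sub>v g"
    "V *\<^sub>v a = U *\<^sub>v b"
proof -
  define M where "M = mat\<^sub>r n (r + g) (\<lambda>i. row V i @\<^sub>v - row U i)"
  have M: "M \<in> carrier_mat n (r + g)" unfolding M_def by auto
  obtain z where z: "z \<in> carrier_vec (r + g)" "z \<noteq> 0\<^sub>v (r + g)" "M *\<^sub>v z = 0\<^sub>v n"
    using wide_mat_kernel[OF M assms(3)] .
  define a where "a = vec_first z r"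
  define b where "b = vec_last z g"
  have a: "a \<in> carrier_vec r" and b: "b \<in> carrier_vec g" unfolding a_def b_def by auto
  have z_ab: "z = a @\<^sub>v b" unfolding a_def b_def using z(1) by simp
  have "0\<^sub>v r @\<^sub>v 0\<^sub>v g = (0\<^sub>v (r + g) :: 'a vec)" by auto
  then have "a \<noteq> 0\<^sub>v r \<or> b \<noteq> 0\<^sub>v g"
    using z(2) unfolding z_ab by auto
  moreover have "V *\<^sub>v a = U *\<^sub>v b"
  proof (rule eq_vecI)
    fix i assume "i < dim_vec (U *\<^sub>v b)"
    then have i: "i < n" using U by simp
    have "0 = (M *\<^sub>v z) $ i" using z(3) i by simp
    also have "\<dots> = row V i \<bullet> a - row U i \<bullet> b"
      using i V U a b unfolding M_def z_ab by (simp add: scalar_prod_append[of _ r _ g])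
    finally show "(V *\<^sub>v a) $ i = (U *\<^sub>v b) $ i" using i V U by simp
  qed (use V U in auto)
  ultimately show thesis using that a b by blast
qed

lemma diagonal_quadratic_form:
  fixes D :: "real mat"
  assumes D: "D \<in> carrier_mat n n" and "diagonal_mat D" and y: "y \<in> carrier_vec n"
  shows "y \<bullet> (D *\<^sub>v y) = (\<Sum>i<n. D $$ (i, i) * (y $ i)\<^sup>2)"
proof -
  have "(D *\<^sub>v y) $ i = D $$ (i, i) * y $ i" if "i < n" for i
  proof -
    have "(D *\<^sub>v y) $ i = (\<Sum>j<n. D $$ (i, j) * y $ j)"
      using D y that by (simp add: scalar_prod_def lessThan_atLeast0)
    also have "\<dots> = (\<Sum>j<n. if j = i then D $$ (i, i) * y $ j else 0)"
      using assms(2) D that by (intro sum.cong) (auto simp: diagonal_mat_def)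
    finally show ?thesis using that by simp
  qed
  then show ?thesis
    using D y by (auto simp: scalar_prod_def lessThan_atLeast0 power2_eq_square intro!: sum.cong)
qed

lemma scalar_prod_self_eq_sum_squares:
  "(y :: real vec) \<in> carrier_vec n \<Longrightarrow> y \<bullet> y = (\<Sum>i<n. (y $ i)\<^sup>2)"
  by (simp add: scalar_prod_def lessThan_atLeast0 power2_eq_square)

lemma diagonal_quadratic_form_le:
  fixes D :: "real mat"
  assumes D: "D \<in> carrier_mat n n" "diagonal_mat D" and y: "y \<in> carrier_vec n"
    and supp: "\<And>i. i < n \<Longrightarrow> c < D $$ (i, i) \<Longrightarrow> y $ i = 0"
  shows "y \<bullet> (D *\<^sub>v y) \<le> c * (y \<bullet> y)"
proof -
  have "(\<Sum>i<n. D $$ (i, i) * (y $ i)\<^sup>2) \<le> (\<Sum>i<n. c * (y $ i)\<^sup>2)"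
    using supp by (intro sum_mono) (metis lessThan_iff mult_right_mono not_le zero_le_power2 mult_zero_right power_zero_numeral)
  then show ?thesis
    using diagonal_quadratic_form[OF D y] scalar_prod_self_eq_sum_squares[OF y]
    by (simp add: sum_distrib_left)
qed

lemma diagonal_quadratic_form_gt:
  fixes D :: "real mat"
  assumes D: "D \<in> carrier_mat n n" "diagonal_mat D" and y: "y \<in> carrier_vec n" "y \<noteq> 0\<^sub>v n"
    and supp: "\<And>i. i < n \<Longrightarrow> D $$ (i, i) \<le> c \<Longrightarrow> y $ i = 0"
  shows "c * (y \<bullet> y) < y \<bullet> (D *\<^sub>v y)"
proof -
  obtain k where k: "k < n" "y $ k \<noteq> 0" using y by (metis eq_vecI carrier_vecD index_zero_vec)
  have "(\<Sum>i<n. c * (y $ i)\<^sup>2) < (\<Sum>i<n. D $$ (i, i) * (y $ i)\<^sup>2)"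
  proof (rule sum_strict_mono_ex1)
    show "\<forall>i\<in>{..<n}. c * (y $ i)\<^sup>2 \<le> D $$ (i, i) * (y $ i)\<^sup>2"
      using supp by (metis lessThan_iff mult_right_mono nle_le zero_le_power2 mult_zero_right power_zero_numeral)
    have "c < D $$ (k, k)" using k supp[of k] by force
    then show "\<exists>i\<in>{..<n}. c * (y $ i)\<^sup>2 < D $$ (i, i) * (y $ i)\<^sup>2"
      using k by (intro bexI[of _ k]) (auto intro: mult_strict_right_mono)
  qed simp
  then show ?thesis
    using diagonal_quadratic_form[OF D y(1)] scalar_prod_self_eq_sum_squares[OF y(1)]
    by (simp add: sum_distrib_left)
qed

lemma diagonal_rayleigh_le_subspace:
  assumes D: "D \<in> carrier_mat n n" "diagonal_mat D"
  shows "rayleigh_le_subspace D n c (length (filter (\<lambda>j. D $$ (j, j) \<le> c) [0..<n]))"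
proof -
  define J where "J = filter (\<lambda>j. D $$ (j, j) \<le> c) [0..<n]"
  have S: "isometry_mat (selection_mat n J) n (length J)"
    by (rule isometry_selection_mat) (auto simp: J_def)
  have "(selection_mat n J *\<^sub>v a) \<bullet> (D *\<^sub>v (selection_mat n J *\<^sub>v a))
      \<le> c * ((selection_mat n J *\<^sub>v a) \<bullet> (selection_mat n J *\<^sub>v a))"
    if a: "a \<in> carrier_vec (length J)" for a
    by (rule diagonal_quadratic_form_le[OF D mult_mat_vec_carrier[OF selection_mat_carrier a]])
      (use selection_mat_mult_vec_outside[OF a] in \<open>auto simp: J_def\<close>)
  then show ?thesis
    using isometry_mat_mult_vec_eq_0[OF S] unfolding rayleigh_le_subspace_def J_def[symmetric]
    by (intro bexI[of _ "selection_mat n J"]) auto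
qed

lemma diagonal_rayleigh_le_subspace_bound:
  assumes D: "D \<in> carrier_mat n n" "diagonal_mat D" and R: "rayleigh_le_subspace D n c r"
  shows "r \<le> length (filter (\<lambda>j. D $$ (j, j) \<le> c) [0..<n])"
proof (rule ccontr)
  \<comment> \<open>otherwise the subspace meets the span of the coordinates j with c < D $$ (j, j) nontrivially\<close>
  assume small: "\<not> ?thesis"
  obtain V where V: "V \<in> carrier_mat n r"
    and inj: "\<And>a. a \<in> carrier_vec r \<Longrightarrow> V *\<^sub>v a = 0\<^sub>v n \<Longrightarrow> a = 0\<^sub>v r"
    and le: "\<And>a. a \<in> carrier_vec r \<Longrightarrow> (V *\<^sub>v a) \<bullet> (D *\<^sub>v (V *\<^sub>v a)) \<le> c * ((V *\<^sub>v a) \<bullet> (V *\<^sub>v a))"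
    using R unfolding rayleigh_le_subspace_def by blast
  define K where "K = filter (\<lambda>j. \<not> D $$ (j, j) \<le> c) [0..<n]"
  let ?U = "selection_mat n K"
  have U: "isometry_mat ?U n (length K)"
    by (rule isometry_selection_mat) (auto simp: K_def)
  have "n < r + length K"
    using small sum_length_filter_compl[of "\<lambda>j. D $$ (j, j) \<le> c" "[0..<n]"] by (simp add: K_def)
  then obtain a b where a: "a \<in> carrier_vec r" and b: "b \<in> carrier_vec (length K)"
    and nz: "a \<noteq> 0\<^sub>v r \<or> b \<noteq> 0\<^sub>v (length K)" and eq: "V *\<^sub>v a = ?U *\<^sub>v b"
    using mult_mat_vec_eq_nontrivial[OF V selection_mat_carrier] by blast
  define y where "y = ?U *\<^sub>v b"
  have y: "y \<in> carrier_vec n" unfolding y_def by (rule mult_mat_vec_carrier[OF selection_mat_carrier b])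
  have "y \<noteq> 0\<^sub>v n"
  proof
    assume "y = 0\<^sub>v n"
    then have "b = 0\<^sub>v (length K)" and "a = 0\<^sub>v r"
      using isometry_mat_mult_vec_eq_0[OF U b] inj[OF a] eq unfolding y_def by auto
    with nz show False by simp
  qed
  then have "c * (y \<bullet> y) < y \<bullet> (D *\<^sub>v y)"
    by (rule diagonal_quadratic_form_gt[OF D y])
      (use selection_mat_mult_vec_outside[OF b] in \<open>auto simp: y_def K_def\<close>)
  with le[OF a] show False unfolding eq y_def by simp
qed

lemma size_filter_mset_diag_mat:
  assumes "D \<in> carrier_mat n n"
  shows "size {#x \<in># mset (diag_mat D). P x#} = length (filter (\<lambda>j. P (D $$ (j, j))) [0..<n])"
proof -
  have size_filter: "size {#x \<in># mset xs. P x#} = length (filter P xs)" for xs :: "'a list"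
    by (simp flip: mset_filter)
  have "diag_mat D = map (\<lambda>j. D $$ (j, j)) [0..<n]"
    using assms by (simp add: diag_mat_def)
  then show ?thesis unfolding size_filter by (simp add: filter_map o_def)
qed

lemma rayleigh_le_subspace_eigenvalue_count:
  assumes A: "symmetric_mat A n"
  shows "rayleigh_le_subspace A n c (size {#x \<in># proots (char_poly A). x \<le> c#})"
proof -
  obtain Q where Q: "isometry_mat Q n n" and D: "diagonal_mat (transpose_mat Q * A * Q)"
    using symmetric_mat_orthogonally_diagonalizable[OF A] by blast
  have Ac: "A \<in> carrier_mat n n" and Dc: "transpose_mat Q * A * Q \<in> carrier_mat n n"
    using A Q unfolding symmetric_mat_def isometry_mat_def by auto
  show ?thesis
    using rayleigh_le_subspace_isometry[OF Q Ac diagonal_rayleigh_le_subspace[OF Dc D]]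
    unfolding proots_char_poly_orthogonal_diagonal[OF Ac Q D] size_filter_mset_diag_mat[OF Dc] .
qed

lemma rayleigh_le_subspace_le_eigenvalue_count:
  assumes A: "symmetric_mat A n" and R: "rayleigh_le_subspace A n c r"
  shows "r \<le> size {#x \<in># proots (char_poly A). x \<le> c#}"
proof -
  obtain Q where Q: "isometry_mat Q n n" and D: "diagonal_mat (transpose_mat Q * A * Q)"
    using symmetric_mat_orthogonally_diagonalizable[OF A] by blast
  have Ac: "A \<in> carrier_mat n n" and Dc: "transpose_mat Q * A * Q \<in> carrier_mat n n"
    using A Q unfolding symmetric_mat_def isometry_mat_def by auto
  have "transpose_mat (transpose_mat Q) * (transpose_mat Q * A * Q) * transpose_mat Q = A"
    using isometry_mat_conjugation_inverse[OF Q Ac] by simp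
  then have "rayleigh_le_subspace (transpose_mat Q * A * Q) n c r"
    using rayleigh_le_subspace_isometry[OF isometry_mat_transpose[OF Q] Dc] R by simp
  then show ?thesis
    unfolding proots_char_poly_orthogonal_diagonal[OF Ac Q D] size_filter_mset_diag_mat[OF Dc]
    by (rule diagonal_rayleigh_le_subspace_bound[OF Dc D])
qed

lemma sorted_nth_le_iff:
  fixes L :: "'a :: linorder list"
  assumes L: "sorted L" and i: "i < length L"
  shows "L ! i \<le> c \<longleftrightarrow> i < length (filter (\<lambda>x. x \<le> c) L)"
  using assms
proof (induction L arbitrary: i)
  case (Cons a L)
  show ?case
  proof (cases "a \<le> c")
    case True
    then show ?thesis using Cons by (cases i) auto
  next
    case False
    then have "\<forall>x\<in>set L. \<not> x \<le> c" using Cons.prems(1) by auto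
    then show ?thesis using False Cons.prems(2) by (cases i) (auto simp: filter_empty_conv)
  qed
qed simp

lemma sorted_list_of_multiset_image_uminus:
  fixes M :: "'a :: linordered_ab_group_add multiset"
  shows "sorted_list_of_multiset (image_mset uminus M) = map uminus (rev (sorted_list_of_multiset M))"
proof -
  let ?L = "map uminus (rev (sorted_list_of_multiset M))"
  have "sorted ?L" by (simp add: sorted_wrt_map sorted_wrt_rev)
  moreover have "mset ?L = image_mset uminus M" by simp
  ultimately show ?thesis by (metis sorted_list_of_multiset_mset sorted_sort_id)
qed

lemma eig_le_iff:
  assumes A: "symmetric_mat A n" and i: "1 \<le> i" "i \<le> n"
  shows "eig A i \<le> c \<longleftrightarrow> i \<le> size {#x \<in># proots (char_poly A). x \<le> c#}"
proof -
  define L where "L = sorted_list_of_multiset (proots (char_poly A))"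
  have "sorted L" and "mset L = proots (char_poly A)" unfolding L_def by simp_all
  then have len: "length L = n"
    using size_proots_char_poly_symmetric[OF A] by (metis size_mset)
  have count: "size {#x \<in># proots (char_poly A). x \<le> c#} = length (filter (\<lambda>x. x \<le> c) L)"
    using \<open>mset L = proots (char_poly A)\<close> by (metis mset_filter size_mset)
  show ?thesis
    using sorted_nth_le_iff[OF \<open>sorted L\<close>, of "i - 1" c] i len
    unfolding eig_def L_def[symmetric] count by auto
qed

lemma eig_uminus:
  assumes A: "symmetric_mat A n" and j: "j < n"
  shows "eig (- A) (Suc j) = - eig A (n - j)"
proof -
  have "length (sorted_list_of_multiset (proots (char_poly A))) = n"
    using size_proots_char_poly_symmetric[OF A] by (metis mset_sorted_list_of_multiset size_mset)
  then show ?thesis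
    using j unfolding eig_def proots_char_poly_uminus[OF A] sorted_list_of_multiset_image_uminus
    by (simp add: rev_nth Suc_diff_Suc)
qed

section \<open>Cauchy interlacing\<close>

lemma length_le_if_distinct_subset_lessThan:
  "distinct J \<Longrightarrow> set J \<subseteq> {..<n} \<Longrightarrow> length J \<le> n"
  by (metis card_lessThan card_mono distinct_card finite_lessThan)

lemma symmetric_principal_submat:
  assumes "symmetric_mat A n" and "set J \<subseteq> {..<n}"
  shows "symmetric_mat (principal_submat A J) (length J)"
  using assms nth_mem[of _ J] by (intro symmetric_matI) (auto simp: principal_submat_def symmetric_mat_sym subset_eq)

theorem cauchy_interlacing_bottom:
  assumes A: "symmetric_mat A n" and J: "distinct J" "set J \<subseteq> {..<n}"
    and i: "1 \<le> i" "i \<le> length J"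
  shows "eig A i \<le> eig (principal_submat A J) i"
proof -
  let ?B = "principal_submat A J" and ?c = "eig (principal_submat A J) i"
  have Ac: "A \<in> carrier_mat n n" using A unfolding symmetric_mat_def by auto
  have B: "symmetric_mat ?B (length J)" by (rule symmetric_principal_submat[OF A J(2)])
  have "length J \<le> n" using length_le_if_distinct_subset_lessThan[OF J] .
  have "i \<le> size {#x \<in># proots (char_poly ?B). x \<le> ?c#}"
    using eig_le_iff[OF B i, of ?c] by simp
  also have "\<dots> \<le> size {#x \<in># proots (char_poly A). x \<le> ?c#}"
    using rayleigh_le_subspace_le_eigenvalue_count[OF A]
      rayleigh_le_subspace_isometry[OF isometry_selection_mat[OF J] Ac]
      rayleigh_le_subspace_eigenvalue_count[OF B] principal_submat_selection_mat[OF Ac J(2)]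
    by simp
  finally show ?thesis using eig_le_iff[OF A i(1)] i \<open>length J \<le> n\<close> by simp
qed

theorem cauchy_interlacing_top:
  assumes A: "symmetric_mat A n" and J: "distinct J" "set J \<subseteq> {..<n}" and j: "j < length J"
  shows "eig (principal_submat A J) (length J - j) \<le> eig A (n - j)"
proof -
  have Ac: "A \<in> carrier_mat n n" using A unfolding symmetric_mat_def by auto
  have "length J \<le> n" using length_le_if_distinct_subset_lessThan[OF J] .
  have neg: "principal_submat (- A) J = - principal_submat A J"
    using Ac J(2) nth_mem[of _ J] by (intro eq_matI) (auto simp: principal_submat_def subset_eq)
  have "eig (- A) (Suc j) \<le> eig (principal_submat (- A) J) (Suc j)"
    using cauchy_interlacing_bottom[OF symmetric_mat_uminus[OF A] J] j by simp
  moreover have "j < n" using j \<open>length J \<le> n\<close> by simp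
  ultimately show ?thesis
    unfolding neg eig_uminus[OF A \<open>j < n\<close>] eig_uminus[OF symmetric_principal_submat[OF A J(2)] j]
    by simp
qed

section \<open>Threshold graphs\<close>

lemma symmetric_threshold_adj: "symmetric_mat (threshold_adj b) (length b)"
  unfolding symmetric_mat_def threshold_adj_def by (auto intro!: eq_matI simp: max.commute)

lemma subseq_conv_indices:
  "subseq xs ys \<Longrightarrow> \<exists>J. sorted_wrt (<) J \<and> set J \<subseteq> {..<length ys} \<and> xs = map ((!) ys) J"
proof (induction rule: list_emb.induct)
  case (list_emb_Nil ys)
  show ?case by (intro exI[of _ "[]"]) auto
next
  case (list_emb_Cons xs ys y)
  then obtain J where "sorted_wrt (<) J" "set J \<subseteq> {..<length ys}" "xs = map ((!) ys) J" by blast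
  then show ?case by (intro exI[of _ "map Suc J"]) (auto simp: sorted_wrt_map)
next
  case (list_emb_Cons2 x y xs ys)
  then obtain J where "sorted_wrt (<) J" "set J \<subseteq> {..<length ys}" "xs = map ((!) ys) J" by blast
  then show ?case using list_emb_Cons2.hyps(1) by (intro exI[of _ "0 # map Suc J"]) (auto simp: sorted_wrt_map)
qed

lemma threshold_adj_map_nth:
  assumes J: "sorted_wrt (<) J" "set J \<subseteq> {..<length ys}"
  shows "threshold_adj (map ((!) ys) J) = principal_submat (threshold_adj ys) J"
proof (rule eq_matI)
  fix i j assume "i < dim_row (principal_submat (threshold_adj ys) J)"
    and "j < dim_col (principal_submat (threshold_adj ys) J)"
  then have ij: "i < length J" "j < length J" by (auto simp: principal_submat_def)
  have less: "J ! i < J ! j \<longleftrightarrow> i < j" if "i < length J" "j < length J" for i j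
    using J(1) that by (metis sorted_wrt_iff_nth_less not_less_iff_gr_or_eq order.asym)
  have "J ! i < length ys" "J ! j < length ys" using J(2) ij nth_mem by auto
  moreover have "J ! i = J ! j \<longleftrightarrow> i = j" and "max (J ! i) (J ! j) = J ! max i j"
    using less[OF ij] less[OF ij(2,1)] by (auto simp: max_def)
  ultimately show "threshold_adj (map ((!) ys) J) $$ (i, j) = principal_submat (threshold_adj ys) J $$ (i, j)"
    using ij by (simp add: threshold_adj_def principal_submat_def max_def)
qed (auto simp: threshold_adj_def principal_submat_def)

lemma subseq_threshold_eig_interlacing:
  assumes "subseq xs ys"
  shows "1 \<le> i \<Longrightarrow> i \<le> length xs \<Longrightarrow> eig (threshold_adj ys) i \<le> eig (threshold_adj xs) i"
    and "j < length xs \<Longrightarrow> eig (threshold_adj xs) (length xs - j) \<le> eig (threshold_adj ys) (length ys - j)"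
proof -
  obtain J where J: "sorted_wrt (<) J" "set J \<subseteq> {..<length ys}" and xs: "xs = map ((!) ys) J"
    using subseq_conv_indices[OF assms] by blast
  have "distinct J" using J(1) strict_sorted_iff by blast
  note interlacing = cauchy_interlacing_bottom[OF symmetric_threshold_adj \<open>distinct J\<close> J(2)]
    cauchy_interlacing_top[OF symmetric_threshold_adj \<open>distinct J\<close> J(2)]
  show "1 \<le> i \<Longrightarrow> i \<le> length xs \<Longrightarrow> eig (threshold_adj ys) i \<le> eig (threshold_adj xs) i"
    and "j < length xs \<Longrightarrow> eig (threshold_adj xs) (length xs - j) \<le> eig (threshold_adj ys) (length ys - j)"
    using interlacing unfolding xs threshold_adj_map_nth[OF J] by simp_all
qed

lemma subseq_replicate:
  assumes "a \<le> b"
  shows "subseq (replicate a x) (replicate b x)"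
proof -
  have "replicate b x = replicate (b - a) x @ replicate a x"
    using assms by (simp flip: replicate_add)
  then show ?thesis by (metis list_emb_append2 subseq_order.order_refl)
qed

lemma subseq_concat_map:
  "(\<And>i. i \<in> set is \<Longrightarrow> subseq (f i) (g i)) \<Longrightarrow> subseq (concat (map f is)) (concat (map g is))"
  by (induction "is") (auto intro: list_emb_append_mono)

lemma subseq_block_string:
  assumes "length ss' = length ss" and "\<And>i. i < length ss \<Longrightarrow> ss' ! i \<le> ss ! i \<and> ts' ! i \<le> ts ! i"
  shows "subseq (block_string ss' ts') (block_string ss ts)"
  unfolding block_string_def assms(1)
  using assms(2) by (intro subseq_concat_map list_emb_append_mono subseq_replicate) auto

lemma length_block_string_replicate: "length (block_string (replicate k s) (replicate k t)) = k * (s + t)"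
proof -
  have "(\<Sum>i\<leftarrow>[0..<k]. replicate k s ! i + replicate k t ! i) = (\<Sum>i\<leftarrow>[0..<k]. s + t)"
    by (intro arg_cong[of _ _ sum_list] map_cong) auto
  then show ?thesis by (simp add: block_string_def length_concat o_def sum_list_triv)
qed

theorem theorem5p1:
  fixes ss ts :: "nat list" and k :: nat
  assumes "k \<ge> 1" and "length ss = k" and "length ts = k"
    and "\<forall>x\<in>set ss. x \<ge> 1" and "\<forall>x\<in>set ts. x \<ge> 1"
  defines "b \<equiv> block_string ss ts"
    and "s \<equiv> Min (set ss)" and "t \<equiv> Min (set ts)"
    and "\<sigma> \<equiv> Max (set ss)" and "\<tau> \<equiv> Max (set ts)"
  defines "b' \<equiv> block_string (replicate k s) (replicate k t)"
    and "b'' \<equiv> block_string (replicate k \<sigma>) (replicate k \<tau>)"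
  defines "n \<equiv> length b" and "n' \<equiv> k * (s + t)" and "n'' \<equiv> k * (\<sigma> + \<tau>)"
  shows "(\<forall>i\<in>{1..k}. eig (threshold_adj b'') i \<le> eig (threshold_adj b) i
                     \<and> eig (threshold_adj b) i \<le> eig (threshold_adj b') i)
       \<and> (\<forall>j<k. eig (threshold_adj b') (n' - j) \<le> eig (threshold_adj b) (n - j)
                \<and> eig (threshold_adj b) (n - j) \<le> eig (threshold_adj b'') (n'' - j))"
proof -
  have bounds: "s \<le> ss ! i \<and> ss ! i \<le> \<sigma> \<and> t \<le> ts ! i \<and> ts ! i \<le> \<tau>" if "i < k" for i
    unfolding s_def \<sigma>_def t_def \<tau>_def using that assms(2,3) by (auto intro: Min_le Max_ge)
  have "s \<in> set ss" "t \<in> set ts"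
    unfolding s_def t_def using assms(1-3) by (auto intro!: Min_in)
  then have "1 \<le> s" "1 \<le> t" using assms(4,5) by auto
  have sub': "subseq b' b" and sub'': "subseq b b''"
    unfolding b'_def b_def b''_def using bounds assms(2,3) by (auto intro!: subseq_block_string)
  have len: "length b' = n'" "length b'' = n''" "length b = n"
    unfolding b'_def b''_def n'_def n''_def n_def by (simp_all add: length_block_string_replicate)
  have "k \<le> n'" "n' \<le> n"
    using \<open>1 \<le> s\<close> \<open>1 \<le> t\<close> list_emb_length[OF sub'] len by (simp_all add: n'_def)
  show ?thesis
  proof (intro conjI ballI allI impI)
    fix i assume "i \<in> {1..k}"
    then have i: "1 \<le> i" "i \<le> k" by auto
    show "eig (threshold_adj b'') i \<le> eig (threshold_adj b) i"
      by (rule subseq_threshold_eig_interlacing(1)[OF sub'' i(1)])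
        (use i \<open>k \<le> n'\<close> \<open>n' \<le> n\<close> len in simp)
    show "eig (threshold_adj b) i \<le> eig (threshold_adj b') i"
      by (rule subseq_threshold_eig_interlacing(1)[OF sub' i(1)]) (use i \<open>k \<le> n'\<close> len in simp)
  next
    fix j assume "j < k"
    then show "eig (threshold_adj b') (n' - j) \<le> eig (threshold_adj b) (n - j)"
      and "eig (threshold_adj b) (n - j) \<le> eig (threshold_adj b'') (n'' - j)"
      using subseq_threshold_eig_interlacing(2)[OF sub', of j] subseq_threshold_eig_interlacing(2)[OF sub'', of j]
        \<open>k \<le> n'\<close> \<open>n' \<le> n\<close> unfolding len by simp_all
  qed
qed

end
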